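(* For $n\ge 3$, let $P'_n$ be the graph on vertices $v_1,\dots,v_{n+1}$ whose edges are $\{v_i,v_{i+1}\}$ for $1\le i\le n-1$ together with $\{v_{n-1},v_{n+1}\}$ (a path on $n$ vertices with a pendant vertex attached to its second-to-last vertex). Then: (a) if $n\ge 3$ and $n\equiv 0 \pmod 3$, then $\mathrm{mur}(P'_n)=n-2$; (b) if $n\ge 6$ and $n+1=4k$ for some integer $k$, then $\mathrm{mur}(P'_n)=n-2$.
   Context: For a finite simple undirected graph $G$ on vertices $v_1,\dots,v_n$, let $A_G$ be its $(0,1)$-adjacency matrix, $D_G=\mathrm{diag}(d_1,\dots,d_n)$ with $d_i$ the degree of $v_i$, $I$ the $n\times n$ identity matrix and $J$ the $n\times n$ all-ones matrix. A universal adjacency matrix of $G$ is any matrix $\alpha A_G+\beta I+\gamma J+\delta D_G$ with real scalars $\alpha,\beta,\gamma,\delta$ and $\alpha\neq 0$. The minimum universal rank $\mathrm{mur}(G)$ is the minimum rank over all universal adjacency matrices of $G$. *)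

theory Defs
  imports Jordan_Normal_Form.DL_Rank
begin

text \<open>A finite simple graph on vertex set {0..<N} is given by an adjacency predicate
  E (assumed symmetric and irreflexive for the graphs we use).  Vertex v_i of the
  paper corresponds to index i-1.\<close>

definition adj_mat :: "nat \<Rightarrow> (nat \<Rightarrow> nat \<Rightarrow> bool) \<Rightarrow> real mat" where
  "adj_mat N E = mat N N (\<lambda>(i,j). if E i j then 1 else 0)"

definition degree :: "nat \<Rightarrow> (nat \<Rightarrow> nat \<Rightarrow> bool) \<Rightarrow> nat \<Rightarrow> nat" where
  "degree N E i = card {j. j < N \<and> E i j}"

definition deg_mat :: "nat \<Rightarrow> (nat \<Rightarrow> nat \<Rightarrow> bool) \<Rightarrow> real mat" where
  "deg_mat N E = mat N N (\<lambda>(i,j). if i = j then real (degree N E i) else 0)"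

definition all_ones_mat :: "nat \<Rightarrow> real mat" where
  "all_ones_mat N = mat N N (\<lambda>_. 1)"

definition univ_adj_mat ::
  "nat \<Rightarrow> (nat \<Rightarrow> nat \<Rightarrow> bool) \<Rightarrow> real \<Rightarrow> real \<Rightarrow> real \<Rightarrow> real \<Rightarrow> real mat" where
  "univ_adj_mat N E \<alpha> \<beta> \<gamma> \<delta> =
     \<alpha> \<cdot>\<^sub>m adj_mat N E + \<beta> \<cdot>\<^sub>m (1\<^sub>m N) + \<gamma> \<cdot>\<^sub>m all_ones_mat N + \<delta> \<cdot>\<^sub>m deg_mat N E"

definition mat_rank :: "real mat \<Rightarrow> nat" where
  "mat_rank A = vec_space.rank (dim_row A) A"

definition mur :: "nat \<Rightarrow> (nat \<Rightarrow> nat \<Rightarrow> bool) \<Rightarrow> nat" where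
  "mur N E = Min {mat_rank (univ_adj_mat N E \<alpha> \<beta> \<gamma> \<delta>) | \<alpha> \<beta> \<gamma> \<delta>. \<alpha> \<noteq> 0}"

definition Pprime_edge :: "nat \<Rightarrow> nat \<Rightarrow> nat \<Rightarrow> bool" where
  "Pprime_edge n i j \<longleftrightarrow>
     (i + 1 = j \<and> j \<le> n - 1) \<or> (j + 1 = i \<and> i \<le> n - 1) \<or>
     (i = n - 2 \<and> j = n) \<or> (i = n \<and> j = n - 2)"

end

theory Submission
  imports Defs Jordan_Normal_Form.DL_Rank_Submatrix Jordan_Normal_Form.Matrix_Kernel
begin

(* Lower bound: in B = \<alpha>A + \<beta>I + \<delta>D the submatrix with rows v_1, ..., v_{n-1} and columns
   v_2, ..., v_n is lower triangular with diagonal \<alpha>, so rank B \<ge> n - 1; as \<gamma>J has rank at most 1,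
   every universal adjacency matrix of P'_n has rank at least n - 2.

   Upper bound: if the kernel of a universal adjacency matrix contains vectors restricting to the
   three unit vectors on the coordinates v_1, v_2, v_{n+1}, these three columns are combinations of
   the remaining n - 2.  The two leaves v_n, v_{n+1} are twins, which gives e_{n+1} - e_n.
   For 3 | n, take A + I - D - J/(n+1) with the all-ones vector and the 6-periodic sequence
   1, 0, -1, -1, 0, 1 on the path v_1, ..., v_n.  For n = 4k - 1, take A - 2J/(n+1) with the
   4-periodic sequences 1, 0, -1, 0 and 0, 1, 1, 0 on the path. *)

lemma mat_kernel_diff:
  assumes "A \<in> carrier_mat nr nc" and "v \<in> mat_kernel A" and "w \<in> mat_kernel A"
  shows "v - w \<in> mat_kernel A"
  using assms by (auto simp: mat_kernel mult_minus_distrib_mat_vec)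

lemma (in vec_space) rank_le_diff_card_kernel_pivots:
  assumes A: "A \<in> carrier_mat n nc" and S: "S \<subseteq> {..<nc}"
    and pivots: "\<And>j. j \<in> S \<Longrightarrow> \<exists>v \<in> mat_kernel A. v $ j = 1 \<and> (\<forall>p \<in> S - {j}. v $ p = 0)"
  shows "rank A \<le> nc - card S"
proof -
  have fin_S: "finite S" using S finite_nat_iff_bounded by blast
  define ks where "ks = sorted_list_of_set ({..<nc} - S)"
  define ws where "ws = map (col A) ks"
  have set_ks: "set ks = {..<nc} - S" and dist_ks: "distinct ks" unfolding ks_def by auto
  have ks_bound: "ks ! l < nc" if "l < length ks" for l
    using nth_mem[OF that] set_ks by auto
  have len_ws: "length ws = nc - card S"
    unfolding ws_def ks_def using S by (simp add: card_Diff_subset finite_subset)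
  have ws_carrier: "set ws \<subseteq> carrier_vec n" unfolding ws_def using A by auto
  have ws_cols: "set ws \<subseteq> set (cols A)" unfolding ws_def cols_def using A set_ks by auto
  have col_span: "col A j \<in> span (set ws)" if j: "j < nc" for j
  proof (cases "j \<in> S")
    case False
    then have "col A j \<in> set ws" unfolding ws_def using j set_ks by auto
    then show ?thesis using in_own_span[OF ws_carrier] by auto
  next
    case True
    from pivots[OF True] obtain v where v: "v \<in> mat_kernel A" "v $ j = 1"
      "\<And>p. p \<in> S - {j} \<Longrightarrow> v $ p = 0" by blast
    have v_carrier: "v \<in> carrier_vec nc" and Av: "A *\<^sub>v v = 0\<^sub>v n" using mat_kernelD[OF A v(1)] by auto
    define c where "c l = - v $ (ks ! l)" for l
    have "col A j = mat_of_cols n ws *\<^sub>v vec (length ws) c"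
    proof (rule eq_vecI)
      fix i assume "i < dim_vec (mat_of_cols n ws *\<^sub>v vec (length ws) c)"
      then have i: "i < n" by simp
      have "0 = (\<Sum>k\<in>{..<nc}. A $$ (i, k) * v $ k)"
        using arg_cong[OF Av, of "\<lambda>w. w $ i"] A v_carrier i
        by (auto simp: scalar_prod_def lessThan_atLeast0)
      also have "\<dots> = (\<Sum>k\<in>S. A $$ (i, k) * v $ k) + (\<Sum>k\<in>set ks. A $$ (i, k) * v $ k)"
        unfolding set_ks using S by (subst sum.subset_diff[of S]) auto
      also have "(\<Sum>k\<in>S. A $$ (i, k) * v $ k) = A $$ (i, j)"
        using True v(2,3) fin_S by (subst sum.remove[of S j]) (auto intro!: sum.neutral)
      also have "(\<Sum>k\<in>set ks. A $$ (i, k) * v $ k) = (\<Sum>l<length ks. A $$ (i, ks ! l) * v $ (ks ! l))"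
        using sum_list_distinct_conv_sum_set[OF dist_ks, of "\<lambda>k. A $$ (i, k) * v $ k"]
        by (simp add: sum_list_sum_nth atLeast0LessThan)
      also have "\<dots> = - (mat_of_cols n ws *\<^sub>v vec (length ws) c) $ i"
        using i A ks_bound
        by (auto simp: ws_def c_def scalar_prod_def mat_of_cols_index sum_negf lessThan_atLeast0
            intro!: sum.cong)
      finally show "col A j $ i = (mat_of_cols n ws *\<^sub>v vec (length ws) c) $ i"
        using A i j by simp
    qed (use A in simp)
    also have "\<dots> = lincomb_list c ws"
      using ws_carrier by (subst lincomb_list_as_mat_mult) auto
    also have "\<dots> \<in> span (set ws)"
      unfolding span_list_as_span[OF ws_carrier, symmetric] by (rule in_span_listI) auto
    finally show ?thesis .
  qed
  have "span (set (cols A)) = span (set ws)"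
  proof
    show "span (set (cols A)) \<subseteq> span (set ws)"
      using col_span A by (intro span_subsetI[OF ws_carrier]) (auto simp: cols_def)
    show "span (set ws) \<subseteq> span (set (cols A))" using span_is_monotone[OF ws_cols] .
  qed
  then have "rank A = rank (mat_of_cols n ws)" unfolding rank_def using ws_carrier by simp
  also have "\<dots> \<le> length ws" by (rule rank_le_nc) simp
  finally show ?thesis using len_ws by simp
qed

lemma (in vec_space) rank_ge_lower_triangular_minor:
  assumes A: "A \<in> carrier_mat n nc" and r: "r \<le> n" "s + r \<le> nc"
    and upper: "\<And>i j. i < j \<Longrightarrow> j < r \<Longrightarrow> A $$ (i, s + j) = 0"
    and diag: "\<And>i. i < r \<Longrightarrow> A $$ (i, s + i) \<noteq> 0"
  shows "r \<le> rank A"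
proof -
  define B where "B = submatrix A {0..<r} {s..<s+r}"
  have rows: "{i. i < dim_row A \<and> i \<in> {0..<r}} = {0..<r}"
    and cols: "{j. j < dim_col A \<and> j \<in> {s..<s+r}} = {s..<s+r}" using A r by auto
  have "dim_row B = r" "dim_col B = r" unfolding B_def dim_submatrix rows cols by simp_all
  then have B: "B \<in> carrier_mat r r" by auto
  have pick_interval: "pick {a..<a+r} j = a + j" if "j < r" for a j
  proof -
    have "{x \<in> {a..<a+r}. x < a + j} = {a..<a+j}" using that by auto
    then show ?thesis using pick_card_in_set[of "a + j" "{a..<a+r}"] that by simp
  qed
  have B_index: "B $$ (i, j) = A $$ (i, s + j)" if "i < r" "j < r" for i j
  proof -
    have "B $$ (i, j) = A $$ (pick {0..<r} i, pick {s..<s+r} j)"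
      unfolding B_def by (rule submatrix_index) (use that in \<open>unfold rows cols, simp_all\<close>)
    then show ?thesis using pick_interval[of i 0] pick_interval[of j s] that by simp
  qed
  have "det B = prod_list (diag_mat B)"
    by (rule det_lower_triangular[OF _ B]) (simp add: B_index upper)
  also have "diag_mat B = map (\<lambda>i. A $$ (i, s + i)) [0..<r]"
    using B by (auto simp: diag_mat_def B_index)
  finally have "det B \<noteq> 0" using diag by auto
  then have "card {j. j < nc \<and> j \<in> {s..<s+r}} \<le> rank A"
    unfolding B_def by (rule rank_gt_minor[OF A])
  moreover have "{j. j < nc \<and> j \<in> {s..<s+r}} = {s..<s+r}" using r by auto
  ultimately show ?thesis by simp
qed

lemma univ_adj_mat_carrier: "univ_adj_mat N E a b c d \<in> carrier_mat N N"
  unfolding univ_adj_mat_def adj_mat_def all_ones_mat_def deg_mat_def by auto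

lemma univ_adj_mat_index:
  assumes "i < N" "k < N"
  shows "univ_adj_mat N E a b c d $$ (i, k) =
    a * (if E i k then 1 else 0) + (if i = k then b + d * real (degree N E i) else 0) + c"
  using assms unfolding univ_adj_mat_def adj_mat_def all_ones_mat_def deg_mat_def by simp

lemma univ_adj_mat_mult_vec_index:
  assumes "i < N"
  shows "(univ_adj_mat N E a b c d *\<^sub>v vec N u) $ i =
    a * (\<Sum>k | k < N \<and> E i k. u k) + (b + d * real (degree N E i)) * u i + c * (\<Sum>k<N. u k)"
proof -
  have "(univ_adj_mat N E a b c d *\<^sub>v vec N u) $ i = (\<Sum>k<N. univ_adj_mat N E a b c d $$ (i, k) * u k)"
    using assms univ_adj_mat_carrier[of N E a b c d]
    by (auto simp: scalar_prod_def lessThan_atLeast0 intro!: sum.cong)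
  also have "\<dots> = (\<Sum>k<N. a * (if E i k then u k else 0)
      + (if k = i then (b + d * real (degree N E i)) * u k else 0) + c * u k)"
    using assms by (intro sum.cong) (auto simp: univ_adj_mat_index algebra_simps)
  also have "\<dots> = a * (\<Sum>k<N. if E i k then u k else 0)
      + (b + d * real (degree N E i)) * u i + c * (\<Sum>k<N. u k)"
    using assms by (simp add: sum.distrib sum_distrib_left)
  also have "(\<Sum>k<N. if E i k then u k else 0) = (\<Sum>k | k < N \<and> E i k. u k)"
    by (simp add: sum.If_cases Collect_conj_eq lessThan_def Int_commute)
  finally show ?thesis using assms by simp
qed

lemma univ_adj_mat_kernelI:
  assumes "\<And>i. i < N \<Longrightarrow>
    a * (\<Sum>k | k < N \<and> E i k. u k) + (b + d * real (degree N E i)) * u i + c * (\<Sum>k<N. u k) = 0"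
  shows "vec N u \<in> mat_kernel (univ_adj_mat N E a b c d)"
proof (rule mat_kernelI[OF univ_adj_mat_carrier])
  show "univ_adj_mat N E a b c d *\<^sub>v vec N u = 0\<^sub>v N"
  proof (rule eq_vecI)
    fix i assume "i < dim_vec (0\<^sub>v N :: real vec)"
    then have i: "i < N" by simp
    have "(univ_adj_mat N E a b c d *\<^sub>v vec N u) $ i = 0"
      unfolding univ_adj_mat_mult_vec_index[OF i] by (rule assms[OF i])
    then show "(univ_adj_mat N E a b c d *\<^sub>v vec N u) $ i = 0\<^sub>v N $ i" using i by simp
  qed (use univ_adj_mat_carrier[of N E a b c d] in simp)
qed simp

lemma ones_in_univ_adj_mat_kernel:
  assumes "b + c * real N = 0"
  shows "vec N (\<lambda>_. 1) \<in> mat_kernel (univ_adj_mat N E a b c (- a))"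
  using assms by (intro univ_adj_mat_kernelI) (simp add: degree_def algebra_simps)

lemma twin_diff_in_univ_adj_mat_kernel:
  assumes "p < N" "q < N" "p \<noteq> q"
    and twins: "\<And>i. i < N \<Longrightarrow> E i p \<longleftrightarrow> E i q" and "\<not> E p p" "\<not> E q q"
    and "b + d * real (degree N E p) = 0" "b + d * real (degree N E q) = 0"
  shows "vec N (\<lambda>k. of_bool (k = p) - of_bool (k = q)) \<in> mat_kernel (univ_adj_mat N E a b c d)"
proof (rule univ_adj_mat_kernelI)
  fix i assume i: "i < N"
  have "(\<Sum>k | k < N \<and> E i k. of_bool (k = p) - of_bool (k = q)) = (0::real)"
    using twins[OF i] assms(1,2) by (simp add: sum_subtractf of_bool_def sum.delta)
  moreover have "(\<Sum>k<N. of_bool (k = p) - of_bool (k = q)) = (0::real)"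
    using assms(1,2) by (simp add: sum_subtractf of_bool_def sum.delta)
  ultimately show "a * (\<Sum>k | k < N \<and> E i k. of_bool (k = p) - of_bool (k = q))
      + (b + d * real (degree N E i)) * (of_bool (i = p) - of_bool (i = q))
      + c * (\<Sum>k<N. of_bool (k = p) - of_bool (k = q)) = 0"
    using assms(3,7,8) by (cases "i = p"; cases "i = q") simp_all
qed

lemma mat_rank_univ_adj_mat: "mat_rank (univ_adj_mat N E a b c d) = vec_space.rank N (univ_adj_mat N E a b c d)"
  using univ_adj_mat_carrier[of N E a b c d] unfolding mat_rank_def by simp

lemma mat_rank_univ_adj_mat_ge_induced_path:
  assumes a: "a \<noteq> 0" and r: "r < N"
    and path: "\<And>i. i < r \<Longrightarrow> E i (Suc i)"
    and induced: "\<And>i k. Suc i < k \<Longrightarrow> k \<le> r \<Longrightarrow> \<not> E i k"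
  shows "r - 1 \<le> mat_rank (univ_adj_mat N E a b c d)"
proof -
  let ?M = "univ_adj_mat N E a b c d" and ?B = "univ_adj_mat N E a b 0 d"
  let ?J = "(- c) \<cdot>\<^sub>m all_ones_mat N"
  have J: "?J \<in> carrier_mat N N" by (simp add: all_ones_mat_def)
  have "?B = ?M + ?J"
    by (rule eq_matI) (auto simp: univ_adj_mat_index all_ones_mat_def univ_adj_mat_carrier[THEN carrier_matD(1)]
        univ_adj_mat_carrier[THEN carrier_matD(2)])
  then have "vec_space.rank N ?B \<le> vec_space.rank N ?M + vec_space.rank N ?J"
    using vec_space.rank_subadditive[OF univ_adj_mat_carrier J] by simp
  moreover have "vec_space.rank N ?J \<le> 1"
    using J by (intro vec_space.rank_le_1_product_entries[where f = "\<lambda>_. - c" and g = "\<lambda>_. 1"])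
      (auto simp: all_ones_mat_def)
  moreover have "r \<le> vec_space.rank N ?B"
  proof (rule vec_space.rank_ge_lower_triangular_minor[OF univ_adj_mat_carrier, where r = r and s = 1])
    show "?B $$ (i, 1 + j) = 0" if "i < j" "j < r" for i j
      using that r induced[of i "1 + j"] by (simp add: univ_adj_mat_index)
    show "?B $$ (i, 1 + i) \<noteq> 0" if "i < r" for i
      using that r path[of i] a by (simp add: univ_adj_mat_index)
  qed (use r in auto)
  ultimately show ?thesis unfolding mat_rank_univ_adj_mat by linarith
qed

lemma mur_eqI:
  assumes lower: "\<And>a b c d. a \<noteq> 0 \<Longrightarrow> r \<le> mat_rank (univ_adj_mat N E a b c d)"
    and "a \<noteq> 0" and upper: "mat_rank (univ_adj_mat N E a b c d) \<le> r"
  shows "mur N E = r"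
  unfolding mur_def
proof (rule Min_eqI)
  have "mat_rank (univ_adj_mat N E a b c d) \<le> N" for a b c d
    unfolding mat_rank_univ_adj_mat by (rule vec_space.rank_le_nc[OF univ_adj_mat_carrier])
  then have "{mat_rank (univ_adj_mat N E a b c d) | a b c d. a \<noteq> 0} \<subseteq> {..N}" by auto
  then show "finite {mat_rank (univ_adj_mat N E a b c d) | a b c d. a \<noteq> 0}"
    by (rule finite_subset) simp
  show "r \<le> y" if "y \<in> {mat_rank (univ_adj_mat N E a b c d) | a b c d. a \<noteq> 0}" for y
    using that lower by auto
  have "mat_rank (univ_adj_mat N E a b c d) = r"
    using lower[OF \<open>a \<noteq> 0\<close>, of b c d] upper by (rule antisym[symmetric])
  then show "r \<in> {mat_rank (univ_adj_mat N E a b c d) | a b c d. a \<noteq> 0}"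
    using \<open>a \<noteq> 0\<close> by blast
qed

lemma Pprime_neighbours:
  assumes "n \<ge> 3" "i < n + 1"
  shows "{k. k < n + 1 \<and> Pprime_edge n i k} =
    (if i = 0 then {1} else if i \<le> n - 3 then {i - 1, i + 1}
     else if i = n - 2 then {n - 3, n - 1, n} else {n - 2})"
  using assms unfolding Pprime_edge_def by (auto split: if_splits)

lemma Pprime_degree:
  assumes "n \<ge> 3" "i < n + 1"
  shows "degree (n + 1) (Pprime_edge n) i =
    (if i = 0 then 1 else if i \<le> n - 3 then 2 else if i = n - 2 then 3 else 1)"
  unfolding degree_def Pprime_neighbours[OF assms] using assms by auto

definition path_vec :: "nat \<Rightarrow> (nat \<Rightarrow> real) \<Rightarrow> real vec" where
  "path_vec n f = vec (n + 1) (\<lambda>k. if k < n then f k else 0)"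

lemma dim_path_vec [simp]: "dim_vec (path_vec n f) = n + 1"
  unfolding path_vec_def by simp

lemma path_vec_index [simp]: "k < n + 1 \<Longrightarrow> path_vec n f $ k = (if k < n then f k else 0)"
  unfolding path_vec_def by simp

(* The hypotheses are the kernel equations at v_1, at the inner path vertices, at the branch
   vertex v_{n-1} and at the two leaves, simplified using b = -d. *)
lemma path_vec_in_Pprime_kernel:
  fixes f :: "nat \<Rightarrow> real"
  assumes n: "n \<ge> 3" and bd: "b + d = 0"
    and \<sigma>: "\<sigma> = c * (\<Sum>k<n. f k)"
    and recurrence: "\<And>k. f (k + 2) + f k + d * f (k + 1) + \<sigma> = 0"
    and start: "f 1 + \<sigma> = 0" and stop: "f (n - 2) + \<sigma> = 0" and branch: "d * f (n - 2) = 0"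
  shows "path_vec n f \<in> mat_kernel (univ_adj_mat (n + 1) (Pprime_edge n) 1 b c d)"
  unfolding path_vec_def
proof (rule univ_adj_mat_kernelI)
  let ?g = "\<lambda>k. if k < n then f k else 0"
  fix i assume i: "i < n + 1"
  have sum: "c * (\<Sum>k<n + 1. ?g k) = \<sigma>" unfolding \<sigma> by simp
  have nbrs: "(\<Sum>k | k < n + 1 \<and> Pprime_edge n i k. ?g k) =
    (if i = 0 then f 1 else if i \<le> n - 3 then f (i - 1) + f (i + 1)
     else if i = n - 2 then f (n - 3) + f (n - 1) else f (n - 2))"
    unfolding Pprime_neighbours[OF n i] using n i by auto
  consider "i = 0" | "0 < i" "i \<le> n - 3" | "i = n - 2" | "i = n - 1 \<or> i = n" using n i by linarith
  then show "1 * (\<Sum>k | k < n + 1 \<and> Pprime_edge n i k. ?g k)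
      + (b + d * real (degree (n + 1) (Pprime_edge n) i)) * ?g i + c * (\<Sum>k<n + 1. ?g k) = 0"
  proof cases
    case 1
    then have "degree (n + 1) (Pprime_edge n) i = 1" using Pprime_degree[OF n i] by simp
    then show ?thesis using 1 start bd unfolding sum nbrs by simp
  next
    case 2
    have "f (i + 1) + f (i - 1) + d * f i + \<sigma> = 0"
      using recurrence[of "i - 1"] 2 by (simp add: Suc_diff_1)
    moreover have "degree (n + 1) (Pprime_edge n) i = 2" using Pprime_degree[OF n i] 2 by simp
    moreover have "b = - d" using bd by simp
    ultimately show ?thesis using 2 n unfolding sum nbrs by (simp add: algebra_simps)
  next
    case 3
    have "n - 3 + 2 = n - 1" "n - 3 + 1 = n - 2" using n by auto
    then have "f (n - 1) + f (n - 3) + d * f (n - 2) + \<sigma> = 0"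
      using recurrence[of "n - 3"] by simp
    moreover have "(b + 3 * d) * f (n - 2) = 2 * (d * f (n - 2))"
      using bd by (simp add: algebra_simps eq_neg_iff_add_eq_0[symmetric])
    ultimately have "f (n - 3) + f (n - 1) + (b + 3 * d) * f (n - 2) + \<sigma> = 0"
      using branch by linarith
    moreover have "degree (n + 1) (Pprime_edge n) i = 3" using Pprime_degree[OF n i] 3 n by simp
    moreover have "\<not> n - 2 \<le> n - 3" "n - 2 < n" using n by auto
    ultimately show ?thesis using 3 unfolding sum nbrs by (simp add: mult.commute)
  next
    case 4
    then have "degree (n + 1) (Pprime_edge n) i = 1" using Pprime_degree[OF n i] n by auto
    then show ?thesis using 4 n bd stop unfolding sum nbrs by (auto simp: algebra_simps)
  qed
qed

lemma Pprime_twin_in_kernel: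
  assumes n: "n \<ge> 3" and bd: "b + d = 0"
  shows "vec (n + 1) (\<lambda>k. of_bool (k = n) - of_bool (k = n - 1))
    \<in> mat_kernel (univ_adj_mat (n + 1) (Pprime_edge n) a b c d)"
proof -
  have "degree (n + 1) (Pprime_edge n) n = 1" "degree (n + 1) (Pprime_edge n) (n - 1) = 1"
    using Pprime_degree[OF n, of n] Pprime_degree[OF n, of "n - 1"] n by auto
  then show ?thesis
    using n bd by (intro twin_diff_in_univ_adj_mat_kernel) (auto simp: Pprime_edge_def)
qed

lemma mur_Pprime_eqI:
  fixes n :: nat and b c d :: real
  defines "K \<equiv> mat_kernel (univ_adj_mat (n + 1) (Pprime_edge n) 1 b c d)"
  assumes n: "n \<ge> 3"
    and pivot0: "\<exists>v \<in> K. v $ 0 = 1 \<and> v $ 1 = 0 \<and> v $ n = 0"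
    and pivot1: "\<exists>v \<in> K. v $ 0 = 0 \<and> v $ 1 = 1 \<and> v $ n = 0"
    and pivotn: "\<exists>v \<in> K. v $ 0 = 0 \<and> v $ 1 = 0 \<and> v $ n = 1"
  shows "mur (n + 1) (Pprime_edge n) = n - 2"
proof (rule mur_eqI)
  show "n - 2 \<le> mat_rank (univ_adj_mat (n + 1) (Pprime_edge n) a' b' c' d')" if "a' \<noteq> 0" for a' b' c' d'
  proof -
    have "n - 1 - 1 \<le> mat_rank (univ_adj_mat (n + 1) (Pprime_edge n) a' b' c' d')"
      by (rule mat_rank_univ_adj_mat_ge_induced_path[OF that]) (use n in \<open>auto simp: Pprime_edge_def\<close>)
    then show ?thesis by simp
  qed
  have "\<exists>v \<in> K. v $ j = 1 \<and> (\<forall>p \<in> {0, 1, n} - {j}. v $ p = 0)" if "j \<in> {0, 1, n}" for j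
    using that pivot0 pivot1 pivotn n by auto
  then have "vec_space.rank (n + 1) (univ_adj_mat (n + 1) (Pprime_edge n) 1 b c d) \<le> (n + 1) - card {0, 1, n}"
    using n unfolding K_def by (intro vec_space.rank_le_diff_card_kernel_pivots[OF univ_adj_mat_carrier]) auto
  then show "mat_rank (univ_adj_mat (n + 1) (Pprime_edge n) 1 b c d) \<le> n - 2"
    using n unfolding mat_rank_univ_adj_mat by simp
qed simp

fun period6_seq :: "nat \<Rightarrow> real" where
  "period6_seq 0 = 1"
| "period6_seq (Suc 0) = 0"
| "period6_seq (Suc (Suc k)) = period6_seq (Suc k) - period6_seq k"

fun period4_seq :: "nat \<Rightarrow> real" where
  "period4_seq 0 = 1"
| "period4_seq (Suc 0) = 0"
| "period4_seq (Suc (Suc k)) = - period4_seq k"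

fun period4_pairs_seq :: "nat \<Rightarrow> real" where
  "period4_pairs_seq 0 = 0"
| "period4_pairs_seq (Suc 0) = 1"
| "period4_pairs_seq (Suc (Suc k)) = 1 - period4_pairs_seq k"

lemma period6_seq_3j: "period6_seq (3 * j + 1) = 0 \<and> (\<Sum>k<3 * j. period6_seq k) = 0"
proof (induction j)
  case (Suc j)
  have step: "3 * Suc j = Suc (Suc (Suc (3 * j)))" by simp
  show ?case unfolding step using Suc.IH by (simp add: numeral_2_eq_2)
qed simp

lemma period4_seq_4j: "(\<Sum>k<4 * j. period4_seq k) = 0 \<and> period4_seq (4 * j) = 1 \<and> period4_seq (4 * j + 1) = 0"
proof (induction j)
  case (Suc j)
  have step: "4 * Suc j = Suc (Suc (Suc (Suc (4 * j))))" by simp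
  show ?case unfolding step using Suc.IH by simp
qed simp

lemma period4_pairs_seq_4j:
  "(\<Sum>k<4 * j. period4_pairs_seq k) = 2 * real j \<and> period4_pairs_seq (4 * j) = 0
    \<and> period4_pairs_seq (4 * j + 1) = 1"
proof (induction j)
  case (Suc j)
  have step: "4 * Suc j = Suc (Suc (Suc (Suc (4 * j))))" by simp
  show ?case unfolding step using Suc.IH by simp
qed simp

lemma mur_Pprime_mod3:
  assumes n: "n \<ge> 3" "n mod 3 = 0"
  shows "mur (n + 1) (Pprime_edge n) = n - 2"
proof (rule mur_Pprime_eqI[OF n(1)])
  let ?M = "univ_adj_mat (n + 1) (Pprime_edge n) 1 1 (- 1 / real (n + 1)) (- 1)"
  let ?ones = "vec (n + 1) (\<lambda>_. 1) :: real vec"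
  let ?twin = "vec (n + 1) (\<lambda>k. of_bool (k = n) - of_bool (k = n - 1)) :: real vec"
  obtain j where j: "n = 3 * j" using n(2) by (auto elim!: dvdE)
  have seq: "path_vec n period6_seq \<in> mat_kernel ?M"
  proof (rule path_vec_in_Pprime_kernel[where \<sigma> = 0])
    show "0 = - 1 / real (n + 1) * (\<Sum>k<n. period6_seq k)" using period6_seq_3j[of j] j by simp
    show "period6_seq (k + 2) + period6_seq k + - 1 * period6_seq (k + 1) + 0 = 0" for k
      by (simp add: numeral_2_eq_2)
    have "n - 2 = 3 * (j - 1) + 1" using j n(1) by auto
    then show "period6_seq (n - 2) + 0 = 0" "- 1 * period6_seq (n - 2) = 0"
      using period6_seq_3j[of "j - 1"] by simp_all
  qed (use n in auto)
  have ones: "?ones \<in> mat_kernel ?M"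
    using ones_in_univ_adj_mat_kernel[of 1 "- 1 / real (n + 1)" "n + 1" "Pprime_edge n" 1] by simp
  have twin: "?twin \<in> mat_kernel ?M" by (rule Pprime_twin_in_kernel) (use n in auto)
  have carrier: "?M \<in> carrier_mat (n + 1) (n + 1)" by (rule univ_adj_mat_carrier)
  show "\<exists>v \<in> mat_kernel ?M. v $ 0 = 1 \<and> v $ 1 = 0 \<and> v $ n = 0"
    using seq n by (intro bexI[of _ "path_vec n period6_seq"]) simp_all
  have "?ones - path_vec n period6_seq \<in> mat_kernel ?M" by (rule mat_kernel_diff[OF carrier ones seq])
  then have "?ones - path_vec n period6_seq - ?twin \<in> mat_kernel ?M"
    by (rule mat_kernel_diff[OF carrier _ twin])
  then show "\<exists>v \<in> mat_kernel ?M. v $ 0 = 0 \<and> v $ 1 = 1 \<and> v $ n = 0"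
    using n by (intro bexI[of _ "?ones - path_vec n period6_seq - ?twin"]) auto
  show "\<exists>v \<in> mat_kernel ?M. v $ 0 = 0 \<and> v $ 1 = 0 \<and> v $ n = 1"
    using twin n by (intro bexI[of _ ?twin]) auto
qed

lemma mur_Pprime_4j_plus_3:
  assumes n: "n = 4 * j + 3" "j \<ge> 1"
  shows "mur (n + 1) (Pprime_edge n) = n - 2"
proof (rule mur_Pprime_eqI)
  let ?M = "univ_adj_mat (n + 1) (Pprime_edge n) 1 0 (- 2 / real (n + 1)) 0"
  let ?twin = "vec (n + 1) (\<lambda>k. of_bool (k = n) - of_bool (k = n - 1)) :: real vec"
  have n_2: "n - 2 = 4 * j + 1" using n by simp
  have seq: "path_vec n period4_seq \<in> mat_kernel ?M"
  proof (rule path_vec_in_Pprime_kernel[where \<sigma> = 0])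
    show "0 = - 2 / real (n + 1) * (\<Sum>k<n. period4_seq k)"
      using period4_seq_4j[of j] unfolding n(1) by (simp add: numeral_3_eq_3)
    show "period4_seq (k + 2) + period4_seq k + 0 * period4_seq (k + 1) + 0 = 0" for k
      by (simp add: numeral_2_eq_2)
    show "period4_seq (n - 2) + 0 = 0" using period4_seq_4j[of j] unfolding n_2 by simp
  qed (use n in auto)
  have pairs: "path_vec n period4_pairs_seq \<in> mat_kernel ?M"
  proof (rule path_vec_in_Pprime_kernel[where \<sigma> = "- 1"])
    have "(\<Sum>k<n. period4_pairs_seq k) = (\<Sum>k<4 * j. period4_pairs_seq k)
        + period4_pairs_seq (4 * j) + period4_pairs_seq (4 * j + 1) + period4_pairs_seq (4 * j + 2)"
      unfolding n(1) by (simp add: numeral_3_eq_3 numeral_2_eq_2)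
    then have sum: "(\<Sum>k<n. period4_pairs_seq k) = 2 * real j + 2"
      using period4_pairs_seq_4j[of j] by (simp add: numeral_2_eq_2)
    have "real (n + 1) = 2 * (2 * real j + 2)" using n(1) by simp
    then show "- 1 = - 2 / real (n + 1) * (\<Sum>k<n. period4_pairs_seq k)"
      unfolding sum by simp
    show "period4_pairs_seq (k + 2) + period4_pairs_seq k + 0 * period4_pairs_seq (k + 1) + - 1 = 0" for k
      by (simp add: numeral_2_eq_2)
    show "period4_pairs_seq (n - 2) + - 1 = 0" using period4_pairs_seq_4j[of j] unfolding n_2 by simp
  qed (use n in auto)
  have twin: "?twin \<in> mat_kernel ?M" by (rule Pprime_twin_in_kernel) (use n in auto)
  show "\<exists>v \<in> mat_kernel ?M. v $ 0 = 1 \<and> v $ 1 = 0 \<and> v $ n = 0"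
    using seq n by (intro bexI[of _ "path_vec n period4_seq"]) simp_all
  show "\<exists>v \<in> mat_kernel ?M. v $ 0 = 0 \<and> v $ 1 = 1 \<and> v $ n = 0"
    using pairs n by (intro bexI[of _ "path_vec n period4_pairs_seq"]) simp_all
  show "\<exists>v \<in> mat_kernel ?M. v $ 0 = 0 \<and> v $ 1 = 0 \<and> v $ n = 1"
    using twin n by (intro bexI[of _ ?twin]) auto
qed (use n in simp)

theorem proposition27:
  fixes n :: nat
  shows "(n \<ge> 3 \<and> n mod 3 = 0 \<longrightarrow> mur (n + 1) (Pprime_edge n) = n - 2)
       \<and> (n \<ge> 6 \<and> (\<exists>k::int. int n + 1 = 4 * k) \<longrightarrow> mur (n + 1) (Pprime_edge n) = n - 2)"
proof (intro conjI impI)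
  show "mur (n + 1) (Pprime_edge n) = n - 2" if "n \<ge> 3 \<and> n mod 3 = 0"
    using that by (intro mur_Pprime_mod3) simp_all
  show "mur (n + 1) (Pprime_edge n) = n - 2" if "n \<ge> 6 \<and> (\<exists>k::int. int n + 1 = 4 * k)"
  proof -
    from that obtain k :: int where k: "int n + 1 = 4 * k" by blast
    then have "n mod 4 = 3" by presburger
    then have "n = 4 * (n div 4) + 3" "n div 4 \<ge> 1" using that by presburger+
    then show ?thesis by (rule mur_Pprime_4j_plus_3)
  qed
qed

end
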